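(* Let $Q$ be a finite connected quandle and $\alpha$ a congruence of $Q$. If $Q/\alpha$ is simply connected, then $\alpha=\mathcal{O}_{\mathrm{Dis}_\alpha}$ and $\mathrm{Dis}_\alpha=\mathrm{Dis}^\alpha$.
   Context: A quandle is a set $Q$ with a binary operation $*$ such that every left translation $L_x:y\mapsto x*y$ is bijective, $x*(y*z)=(x*y)*(x*z)$ and $x*x=x$; left division is $x\backslash y=L_x^{-1}(y)$. $\mathrm{LMlt}(Q)=\langle L_x:x\in Q\rangle$; $Q$ is connected if it is transitive. A congruence is an equivalence relation compatible with $*$ and $\backslash$. For a congruence $\alpha$: $\mathrm{Dis}_\alpha=\langle L_xL_y^{-1}: x\,\alpha\,y\rangle$; $\mathrm{Dis}(Q)=\langle L_xL_y^{-1}:x,y\in Q\rangle$; $\mathrm{LMlt}^\alpha$ is the kernel of the surjective group homomorphism $\mathrm{LMlt}(Q)\to\mathrm{LMlt}(Q/\alpha)$, $L_x\mapsto L_{[x]_\alpha}$; $\mathrm{Dis}^\alpha=\mathrm{LMlt}^\alpha\cap\mathrm{Dis}(Q)$. For a normal subgroup $N$ of $\mathrm{LMlt}(Q)$, $\mathcal{O}_N=\{(x,h(x)):x\in Q,h\in N\}$ (a congruence). For a set $S$, a quandle cocycle with values in $\mathrm{Sym}_S$ is $\theta:Q\times Q\to\mathrm{Sym}_S$ with $\theta_{x*y,x*z}\theta_{x,z}=\theta_{x,y*z}\theta_{y,z}$, $\theta_{x,x}=1$; it is cohomologous to the trivial cocycle if $\theta_{x,y}=\gamma_{x*y}\gamma_y^{-1}$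 for some $\gamma:Q\to\mathrm{Sym}_S$. A quandle is simply connected if it is connected and for every set $S$ every such cocycle is cohomologous to the trivial cocycle. *)

theory Defs
  imports "HOL-Algebra.Algebra"
begin

definition quandle :: "'a set \<Rightarrow> ('a \<Rightarrow> 'a \<Rightarrow> 'a) \<Rightarrow> bool" where
  "quandle Q op \<longleftrightarrow>
     (\<forall>x\<in>Q. bij_betw (op x) Q Q) \<and>
     (\<forall>x\<in>Q. \<forall>y\<in>Q. \<forall>z\<in>Q. op x (op y z) = op (op x y) (op x z)) \<and>
     (\<forall>x\<in>Q. op x x = x)"

definition ldiv :: "'a set \<Rightarrow> ('a \<Rightarrow> 'a \<Rightarrow> 'a) \<Rightarrow> 'a \<Rightarrow> 'a \<Rightarrow> 'a" where
  "ldiv Q op x y = (THE z. z \<in> Q \<and> op x z = y)"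

definition Lt :: "'a set \<Rightarrow> ('a \<Rightarrow> 'a \<Rightarrow> 'a) \<Rightarrow> 'a \<Rightarrow> ('a \<Rightarrow> 'a)" where
  "Lt Q op x = (\<lambda>y\<in>Q. op x y)"

definition LMlt :: "'a set \<Rightarrow> ('a \<Rightarrow> 'a \<Rightarrow> 'a) \<Rightarrow> ('a \<Rightarrow> 'a) set" where
  "LMlt Q op = generate (BijGroup Q) (Lt Q op ` Q)"

definition Dis :: "'a set \<Rightarrow> ('a \<Rightarrow> 'a \<Rightarrow> 'a) \<Rightarrow> ('a \<Rightarrow> 'a) set" where
  "Dis Q op = generate (BijGroup Q)
     {Lt Q op x \<otimes>\<^bsub>BijGroup Q\<^esub> inv\<^bsub>BijGroup Q\<^esub> (Lt Q op y) | x y. x \<in> Q \<and> y \<in> Q}"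

definition connected_quandle :: "'a set \<Rightarrow> ('a \<Rightarrow> 'a \<Rightarrow> 'a) \<Rightarrow> bool" where
  "connected_quandle Q op \<longleftrightarrow> (\<forall>x\<in>Q. \<forall>y\<in>Q. \<exists>h\<in>LMlt Q op. h x = y)"

definition congruence :: "'a set \<Rightarrow> ('a \<Rightarrow> 'a \<Rightarrow> 'a) \<Rightarrow> 'a rel \<Rightarrow> bool" where
  "congruence Q op \<alpha> \<longleftrightarrow> equiv Q \<alpha> \<and>
     (\<forall>x x' y y'. (x, x') \<in> \<alpha> \<longrightarrow> (y, y') \<in> \<alpha> \<longrightarrow>
        (op x y, op x' y') \<in> \<alpha> \<and> (ldiv Q op x y, ldiv Q op x' y') \<in> \<alpha>)"

text \<open>Quotient quandle Q/alpha: carrier Q // alpha, [x]*[y] = [x*y].\<close>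
definition quot_op :: "'a set \<Rightarrow> ('a \<Rightarrow> 'a \<Rightarrow> 'a) \<Rightarrow> 'a rel \<Rightarrow> 'a set \<Rightarrow> 'a set \<Rightarrow> 'a set" where
  "quot_op Q op \<alpha> A B = \<alpha> `` {op (SOME x. x \<in> A) (SOME y. y \<in> B)}"

definition Dis_rel :: "'a set \<Rightarrow> ('a \<Rightarrow> 'a \<Rightarrow> 'a) \<Rightarrow> 'a rel \<Rightarrow> ('a \<Rightarrow> 'a) set" where
  "Dis_rel Q op \<alpha> = generate (BijGroup Q)
     {Lt Q op x \<otimes>\<^bsub>BijGroup Q\<^esub> inv\<^bsub>BijGroup Q\<^esub> (Lt Q op y) | x y. x \<in> Q \<and> y \<in> Q \<and> (x, y) \<in> \<alpha>}"

text \<open>LMlt^alpha: kernel of LMlt(Q) -> LMlt(Q/alpha), L_x |-> L_[x]. The image of h is the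
  permutation [x] |-> [h x] of Q/alpha, so h is in the kernel iff h x alpha x for all x.\<close>
definition LMlt_up :: "'a set \<Rightarrow> ('a \<Rightarrow> 'a \<Rightarrow> 'a) \<Rightarrow> 'a rel \<Rightarrow> ('a \<Rightarrow> 'a) set" where
  "LMlt_up Q op \<alpha> = {h \<in> LMlt Q op. \<forall>x\<in>Q. (h x, x) \<in> \<alpha>}"

definition Dis_up :: "'a set \<Rightarrow> ('a \<Rightarrow> 'a \<Rightarrow> 'a) \<Rightarrow> 'a rel \<Rightarrow> ('a \<Rightarrow> 'a) set" where
  "Dis_up Q op \<alpha> = LMlt_up Q op \<alpha> \<inter> Dis Q op"

definition orbit_rel :: "'a set \<Rightarrow> ('a \<Rightarrow> 'a) set \<Rightarrow> 'a rel" where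
  "orbit_rel Q N = {(x, h x) | x h. x \<in> Q \<and> h \<in> N}"

definition quandle_cocycle :: "'a set \<Rightarrow> ('a \<Rightarrow> 'a \<Rightarrow> 'a) \<Rightarrow> 's set \<Rightarrow> ('a \<Rightarrow> 'a \<Rightarrow> ('s \<Rightarrow> 's)) \<Rightarrow> bool" where
  "quandle_cocycle Q op S \<theta> \<longleftrightarrow>
     (\<forall>x\<in>Q. \<forall>y\<in>Q. \<theta> x y \<in> carrier (BijGroup S)) \<and>
     (\<forall>x\<in>Q. \<forall>y\<in>Q. \<forall>z\<in>Q.
        \<theta> (op x y) (op x z) \<otimes>\<^bsub>BijGroup S\<^esub> \<theta> x z = \<theta> x (op y z) \<otimes>\<^bsub>BijGroup S\<^esub> \<theta> y z) \<and>
     (\<forall>x\<in>Q. \<theta> x x = \<one>\<^bsub>BijGroup S\<^esub>)"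

definition cohomologous_trivial :: "'a set \<Rightarrow> ('a \<Rightarrow> 'a \<Rightarrow> 'a) \<Rightarrow> 's set \<Rightarrow> ('a \<Rightarrow> 'a \<Rightarrow> ('s \<Rightarrow> 's)) \<Rightarrow> bool" where
  "cohomologous_trivial Q op S \<theta> \<longleftrightarrow>
     (\<exists>\<gamma>. (\<forall>x\<in>Q. \<gamma> x \<in> carrier (BijGroup S)) \<and>
        (\<forall>x\<in>Q. \<forall>y\<in>Q. \<theta> x y = \<gamma> (op x y) \<otimes>\<^bsub>BijGroup S\<^esub> inv\<^bsub>BijGroup S\<^esub> (\<gamma> y)))"

text \<open>Simply connected. HOL cannot quantify over all types inside a formula, so the
  coefficient sets S range over all subsets of nat (all countable sets).\<close>
definition simply_connected :: "'a set \<Rightarrow> ('a \<Rightarrow> 'a \<Rightarrow> 'a) \<Rightarrow> bool" where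
  "simply_connected Q op \<longleftrightarrow> connected_quandle Q op \<and>
     (\<forall>(S :: nat set) \<theta>. quandle_cocycle Q op S \<theta> \<longrightarrow> cohomologous_trivial Q op S \<theta>)"

end

(*
  Let N = Dis_alpha. It is normal in LMlt(Q), and K = LMlt(Q)/N is finite. The map
  phi x = L_x N is constant on alpha-classes and turns * into conjugation, so
  theta([x],[y]) = phi x (phi y)^-1 is a K-valued quandle cocycle on Q/alpha. Through the
  regular representation of K it becomes a Sym(K)-valued cocycle, and simple connectivity
  of Q/alpha makes it a coboundary: there is e : Q -> K, constant on classes, with
  e(x*y) = phi x (phi y)^-1 e(y). This identity says e(d y) = dN e(y) for the generators
  d = L_a L_b^-1 of Dis(Q), hence for all d in Dis(Q). Consequently an element of Dis(Q)
  that keeps one point inside its alpha-class lies in N; this gives Dis^alpha <= Dis_alpha,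
  and, since Dis(Q) is transitive on the connected quandle Q, also alpha <= O_N. The
  reverse inclusions hold because N preserves every alpha-class.
*)

theory Submission
  imports Defs
begin

section \<open>Permutation groups\<close>

lemma (in group) inv_mult_cancel_left [simp]:
  "x \<in> carrier G \<Longrightarrow> y \<in> carrier G \<Longrightarrow> inv x \<otimes> (x \<otimes> y) = y"
  by (simp add: m_assoc[symmetric])

lemma (in group) mult_inv_cancel_left [simp]:
  "x \<in> carrier G \<Longrightarrow> y \<in> carrier G \<Longrightarrow> x \<otimes> (inv x \<otimes> y) = y"
  by (simp add: m_assoc[symmetric])

lemma (in group) conj_m_inv:
  assumes "g \<in> carrier G" "a \<in> carrier G" "b \<in> carrier G"
  shows "g \<otimes> (a \<otimes> inv b) \<otimes> inv g = (g \<otimes> a \<otimes> inv g) \<otimes> inv (g \<otimes> b \<otimes> inv g)"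
  using assms by (simp add: inv_mult_group m_assoc)

lemma BijGroup_mult_apply:
  assumes "f \<in> carrier (BijGroup S)" "g \<in> carrier (BijGroup S)" "x \<in> S"
  shows "(f \<otimes>\<^bsub>BijGroup S\<^esub> g) x = f (g x)"
  using assms by (simp add: BijGroup_def compose_def)

lemma BijGroup_one_apply: "x \<in> S \<Longrightarrow> \<one>\<^bsub>BijGroup S\<^esub> x = x"
  by (simp add: BijGroup_def)

lemma BijGroup_apply_closed: "f \<in> carrier (BijGroup S) \<Longrightarrow> x \<in> S \<Longrightarrow> f x \<in> S"
  by (auto simp: BijGroup_def Bij_def bij_betw_def)

lemma BijGroup_inv_apply:
  assumes f: "f \<in> carrier (BijGroup S)" and x: "x \<in> S"
  shows "f ((inv\<^bsub>BijGroup S\<^esub> f) x) = x" and "(inv\<^bsub>BijGroup S\<^esub> f) (f x) = x"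
proof -
  interpret group "BijGroup S" by (rule group_BijGroup)
  show "f ((inv\<^bsub>BijGroup S\<^esub> f) x) = x"
    using BijGroup_mult_apply[OF f inv_closed[OF f] x] f x by (simp add: BijGroup_one_apply)
  show "(inv\<^bsub>BijGroup S\<^esub> f) (f x) = x"
    using BijGroup_mult_apply[OF inv_closed[OF f] f x] f x by (simp add: BijGroup_one_apply)
qed

lemma BijGroup_eqI:
  assumes "f \<in> carrier (BijGroup S)" "g \<in> carrier (BijGroup S)" "\<And>x. x \<in> S \<Longrightarrow> f x = g x"
  shows "f = g"
  using assms by (auto simp: BijGroup_def Bij_def intro: extensionalityI)

lemma finite_BijGroup: "finite S \<Longrightarrow> finite (carrier (BijGroup S))"
  by (rule finite_subset[of _ "Pi\<^sub>E S (\<lambda>_. S)"])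
    (auto simp: BijGroup_def Bij_def bij_betw_def PiE_iff extensional_def finite_PiE)

lemma class_preserving_subgroup:
  assumes eq: "equiv S \<alpha>"
  shows "subgroup {g \<in> carrier (BijGroup S). \<forall>x\<in>S. (g x, x) \<in> \<alpha>} (BijGroup S)"
    (is "subgroup ?C _")
proof -
  interpret group "BijGroup S" by (rule group_BijGroup)
  have refl: "(x, x) \<in> \<alpha>" if "x \<in> S" for x using eq that by (simp add: equiv_def refl_on_def)
  have sym: "(y, x) \<in> \<alpha>" if "(x, y) \<in> \<alpha>" for x y using eq that by (meson equiv_def symD)
  have trans: "(x, z) \<in> \<alpha>" if "(x, y) \<in> \<alpha>" "(y, z) \<in> \<alpha>" for x y z
    using eq that by (meson equiv_def transD)
  show ?thesis
  proof (rule subgroupI)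
    show "?C \<subseteq> carrier (BijGroup S)" by blast
    have "\<one>\<^bsub>BijGroup S\<^esub> \<in> ?C" using refl by (simp add: BijGroup_one_apply)
    then show "?C \<noteq> {}" by blast
  next
    fix g assume g: "g \<in> ?C"
    then have gc: "g \<in> carrier (BijGroup S)" by simp
    have "((inv\<^bsub>BijGroup S\<^esub> g) x, x) \<in> \<alpha>" if x: "x \<in> S" for x
    proof -
      let ?y = "(inv\<^bsub>BijGroup S\<^esub> g) x"
      have "(g ?y, ?y) \<in> \<alpha>" using g BijGroup_apply_closed[OF inv_closed[OF gc] x] by simp
      then show ?thesis using sym BijGroup_inv_apply(1)[OF gc x] by simp
    qed
    then show "inv\<^bsub>BijGroup S\<^esub> g \<in> ?C" using g by simp
  next
    fix g h assume g: "g \<in> ?C" and h: "h \<in> ?C"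
    have "(g (h x), x) \<in> \<alpha>" if x: "x \<in> S" for x
    proof -
      have "h x \<in> S" using h x by (simp add: BijGroup_apply_closed)
      then show ?thesis using trans[of "g (h x)" "h x" x] g h x by simp
    qed
    then show "g \<otimes>\<^bsub>BijGroup S\<^esub> h \<in> ?C" using g h by (simp add: BijGroup_mult_apply)
  qed
qed

lemma pointwise_subgroup:
  assumes D: "subgroup D (BijGroup S)"
  shows "subgroup {g \<in> carrier (BijGroup S). \<forall>x\<in>S. \<exists>d\<in>D. g x = d x} (BijGroup S)"
    (is "subgroup ?P _")
proof -
  interpret group "BijGroup S" by (rule group_BijGroup)
  have Dc: "d \<in> carrier (BijGroup S)" if "d \<in> D" for d using subgroup.mem_carrier[OF D that] .
  show ?thesis
  proof (rule subgroupI)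
    show "?P \<subseteq> carrier (BijGroup S)" by blast
    have "\<one>\<^bsub>BijGroup S\<^esub> \<in> ?P" using subgroup.one_closed[OF D] by auto
    then show "?P \<noteq> {}" by blast
  next
    fix g assume g: "g \<in> ?P"
    then have gc: "g \<in> carrier (BijGroup S)" by simp
    have "\<exists>d\<in>D. (inv\<^bsub>BijGroup S\<^esub> g) x = d x" if x: "x \<in> S" for x
    proof -
      let ?y = "(inv\<^bsub>BijGroup S\<^esub> g) x"
      have y: "?y \<in> S" using BijGroup_apply_closed[OF inv_closed[OF gc] x] .
      obtain d where d: "d \<in> D" "g ?y = d ?y" using g y by blast
      then have "d ?y = x" using BijGroup_inv_apply(1)[OF gc x] by simp
      then have "(inv\<^bsub>BijGroup S\<^esub> d) x = ?y"
        using BijGroup_inv_apply(2)[OF Dc[OF d(1)] y] by simp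
      then show ?thesis using bexI[OF _ subgroup.m_inv_closed[OF D d(1)]] by simp
    qed
    then show "inv\<^bsub>BijGroup S\<^esub> g \<in> ?P" using g by simp
  next
    fix g h assume g: "g \<in> ?P" and h: "h \<in> ?P"
    have "\<exists>d\<in>D. g (h x) = d x" if x: "x \<in> S" for x
    proof -
      obtain d2 where d2: "d2 \<in> D" "h x = d2 x" using h x by blast
      have "h x \<in> S" using h x by (simp add: BijGroup_apply_closed)
      then obtain d1 where d1: "d1 \<in> D" "g (h x) = d1 (h x)" using g by blast
      have "g (h x) = (d1 \<otimes>\<^bsub>BijGroup S\<^esub> d2) x"
        using d1 d2 Dc x by (simp add: BijGroup_mult_apply)
      then show ?thesis using bexI[OF _ subgroup.m_closed[OF D d1(1) d2(1)]] by simp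
    qed
    then show "g \<otimes>\<^bsub>BijGroup S\<^esub> h \<in> ?P" using g h by (simp add: BijGroup_mult_apply)
  qed
qed

lemma conj_equivariant_subgroup:
  assumes F: "F \<in> S \<rightarrow> carrier (BijGroup S)"
  shows "subgroup {g \<in> carrier (BijGroup S).
    \<forall>a\<in>S. g \<otimes>\<^bsub>BijGroup S\<^esub> F a \<otimes>\<^bsub>BijGroup S\<^esub> inv\<^bsub>BijGroup S\<^esub> g = F (g a)} (BijGroup S)"
    (is "subgroup ?C _")
proof -
  interpret group "BijGroup S" by (rule group_BijGroup)
  have Fc: "F a \<in> carrier (BijGroup S)" if "a \<in> S" for a using F that by blast
  show ?thesis
  proof (rule subgroupI)
    show "?C \<subseteq> carrier (BijGroup S)" by blast
    have "\<one>\<^bsub>BijGroup S\<^esub> \<in> ?C" using Fc by (simp add: BijGroup_one_apply)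
    then show "?C \<noteq> {}" by blast
  next
    fix g assume g: "g \<in> ?C"
    then have gc: "g \<in> carrier (BijGroup S)" by simp
    have "inv\<^bsub>BijGroup S\<^esub> g \<otimes>\<^bsub>BijGroup S\<^esub> F a \<otimes>\<^bsub>BijGroup S\<^esub> inv\<^bsub>BijGroup S\<^esub> (inv\<^bsub>BijGroup S\<^esub> g)
        = F ((inv\<^bsub>BijGroup S\<^esub> g) a)" if a: "a \<in> S" for a
    proof -
      let ?b = "(inv\<^bsub>BijGroup S\<^esub> g) a"
      have b: "?b \<in> S" using BijGroup_apply_closed[OF inv_closed[OF gc] a] .
      have "F a = g \<otimes>\<^bsub>BijGroup S\<^esub> F ?b \<otimes>\<^bsub>BijGroup S\<^esub> inv\<^bsub>BijGroup S\<^esub> g"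
        using g b BijGroup_inv_apply(1)[OF gc a] by simp
      then show ?thesis using gc Fc[OF b] by (simp add: m_assoc)
    qed
    then show "inv\<^bsub>BijGroup S\<^esub> g \<in> ?C" using gc by simp
  next
    fix g h assume g: "g \<in> ?C" and h: "h \<in> ?C"
    then have gc: "g \<in> carrier (BijGroup S)" and hc: "h \<in> carrier (BijGroup S)" by simp_all
    have "(g \<otimes>\<^bsub>BijGroup S\<^esub> h) \<otimes>\<^bsub>BijGroup S\<^esub> F a \<otimes>\<^bsub>BijGroup S\<^esub> inv\<^bsub>BijGroup S\<^esub> (g \<otimes>\<^bsub>BijGroup S\<^esub> h)
        = F ((g \<otimes>\<^bsub>BijGroup S\<^esub> h) a)" if a: "a \<in> S" for a
    proof -
      have "(g \<otimes>\<^bsub>BijGroup S\<^esub> h) \<otimes>\<^bsub>BijGroup S\<^esub> F a \<otimes>\<^bsub>BijGroup S\<^esub> inv\<^bsub>BijGroup S\<^esub> (g \<otimes>\<^bsub>BijGroup S\<^esub> h)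
          = g \<otimes>\<^bsub>BijGroup S\<^esub> (h \<otimes>\<^bsub>BijGroup S\<^esub> F a \<otimes>\<^bsub>BijGroup S\<^esub> inv\<^bsub>BijGroup S\<^esub> h) \<otimes>\<^bsub>BijGroup S\<^esub> inv\<^bsub>BijGroup S\<^esub> g"
        using gc hc Fc[OF a] by (simp add: m_assoc inv_mult_group)
      also have "\<dots> = F (g (h a))" using g h a BijGroup_apply_closed[OF hc a] by simp
      finally show ?thesis using gc hc a by (simp add: BijGroup_mult_apply)
    qed
    then show "g \<otimes>\<^bsub>BijGroup S\<^esub> h \<in> ?C" using gc hc by simp
  qed
qed

lemma relation_preserving_subgroup:
  "subgroup {g \<in> carrier (BijGroup S). \<forall>x\<in>S. \<forall>y\<in>S. (g x, g y) \<in> R \<longleftrightarrow> (x, y) \<in> R} (BijGroup S)"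
    (is "subgroup ?C _")
proof -
  interpret group "BijGroup S" by (rule group_BijGroup)
  show ?thesis
  proof (rule subgroupI)
    show "?C \<subseteq> carrier (BijGroup S)" by blast
    have "\<one>\<^bsub>BijGroup S\<^esub> \<in> ?C" by (simp add: BijGroup_one_apply)
    then show "?C \<noteq> {}" by blast
  next
    fix g assume g: "g \<in> ?C"
    then have gc: "g \<in> carrier (BijGroup S)" by simp
    have "((inv\<^bsub>BijGroup S\<^esub> g) x, (inv\<^bsub>BijGroup S\<^esub> g) y) \<in> R \<longleftrightarrow> (x, y) \<in> R"
      if x: "x \<in> S" and y: "y \<in> S" for x y
    proof -
      let ?x = "(inv\<^bsub>BijGroup S\<^esub> g) x" and ?y = "(inv\<^bsub>BijGroup S\<^esub> g) y"
      have "(g ?x, g ?y) \<in> R \<longleftrightarrow> (?x, ?y) \<in> R"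
        using g BijGroup_apply_closed[OF inv_closed[OF gc] x] BijGroup_apply_closed[OF inv_closed[OF gc] y]
        by blast
      then show ?thesis using BijGroup_inv_apply(1)[OF gc x] BijGroup_inv_apply(1)[OF gc y] by simp
    qed
    then show "inv\<^bsub>BijGroup S\<^esub> g \<in> ?C" using gc by simp
  next
    fix g h assume g: "g \<in> ?C" and h: "h \<in> ?C"
    then have gc: "g \<in> carrier (BijGroup S)" and hc: "h \<in> carrier (BijGroup S)" by simp_all
    have "(g (h x), g (h y)) \<in> R \<longleftrightarrow> (x, y) \<in> R" if x: "x \<in> S" and y: "y \<in> S" for x y
      using g h x y BijGroup_apply_closed[OF hc x] BijGroup_apply_closed[OF hc y] by blast
    then show "g \<otimes>\<^bsub>BijGroup S\<^esub> h \<in> ?C" using gc hc by (simp add: BijGroup_mult_apply)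
  qed
qed

lemma equivariant_subgroup:
  assumes H: "subgroup H (BijGroup S)" and K: "group K"
    and \<pi>: "\<pi> \<in> hom ((BijGroup S)\<lparr>carrier := H\<rparr>) K" and e: "e \<in> S \<rightarrow> carrier K"
  shows "subgroup {g \<in> H. \<forall>x\<in>S. e (g x) = \<pi> g \<otimes>\<^bsub>K\<^esub> e x} (BijGroup S)"
    (is "subgroup ?E _")
proof -
  interpret B: group "BijGroup S" by (rule group_BijGroup)
  interpret K: group K by (rule K)
  interpret \<pi>: group_hom "(BijGroup S)\<lparr>carrier := H\<rparr>" K \<pi>
    using B.subgroup_imp_group[OF H] K \<pi> by (simp add: group_hom_def group_hom_axioms_def)
  have Hc: "g \<in> carrier (BijGroup S)" if "g \<in> H" for g using subgroup.mem_carrier[OF H that] .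
  have \<pi>c: "\<pi> g \<in> carrier K" if "g \<in> H" for g using \<pi>.hom_closed[of g] that by simp
  have ec: "e x \<in> carrier K" if "x \<in> S" for x using e that by blast
  show ?thesis
  proof (rule B.subgroupI)
    show "?E \<subseteq> carrier (BijGroup S)" using Hc by auto
    have "\<one>\<^bsub>BijGroup S\<^esub> \<in> ?E"
      using subgroup.one_closed[OF H] \<pi>.hom_one ec by (simp add: BijGroup_one_apply)
    then show "?E \<noteq> {}" by blast
  next
    fix g assume g: "g \<in> ?E"
    then have gH: "g \<in> H" by simp
    have "e ((inv\<^bsub>BijGroup S\<^esub> g) x) = inv\<^bsub>K\<^esub> \<pi> g \<otimes>\<^bsub>K\<^esub> e x" if x: "x \<in> S" for x
    proof -
      let ?y = "(inv\<^bsub>BijGroup S\<^esub> g) x"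
      have y: "?y \<in> S" using BijGroup_apply_closed[OF B.inv_closed[OF Hc[OF gH]] x] .
      have "e x = \<pi> g \<otimes>\<^bsub>K\<^esub> e ?y" using g y BijGroup_inv_apply(1)[OF Hc[OF gH] x] by auto
      then show ?thesis using \<pi>c[OF gH] ec[OF x] ec[OF y] by (simp add: K.inv_solve_left)
    qed
    moreover have "\<pi> (inv\<^bsub>BijGroup S\<^esub> g) = inv\<^bsub>K\<^esub> \<pi> g"
      using \<pi>.hom_inv[of g] gH B.m_inv_consistent[OF H gH] by simp
    ultimately show "inv\<^bsub>BijGroup S\<^esub> g \<in> ?E" using subgroup.m_inv_closed[OF H gH] by simp
  next
    fix g h assume g: "g \<in> ?E" and h: "h \<in> ?E"
    then have gH: "g \<in> H" and hH: "h \<in> H" by simp_all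
    have "e ((g \<otimes>\<^bsub>BijGroup S\<^esub> h) x) = \<pi> g \<otimes>\<^bsub>K\<^esub> (\<pi> h \<otimes>\<^bsub>K\<^esub> e x)" if x: "x \<in> S" for x
      using g h x BijGroup_apply_closed[OF Hc[OF hH] x] Hc[OF gH] Hc[OF hH]
      by (simp add: BijGroup_mult_apply)
    moreover have "\<pi> (g \<otimes>\<^bsub>BijGroup S\<^esub> h) = \<pi> g \<otimes>\<^bsub>K\<^esub> \<pi> h" using \<pi>.hom_mult[of g h] gH hH by simp
    ultimately show "g \<otimes>\<^bsub>BijGroup S\<^esub> h \<in> ?E"
      using subgroup.m_closed[OF H gH hH] \<pi>c[OF gH] \<pi>c[OF hH] ec by (simp add: K.m_assoc)
  qed
qed

section \<open>Left translations and displacement groups\<close>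

lemma quandle_closed: "quandle Q op \<Longrightarrow> x \<in> Q \<Longrightarrow> y \<in> Q \<Longrightarrow> op x y \<in> Q"
  unfolding quandle_def by (metis bij_betw_apply)

lemma ldiv_eqI:
  assumes q: "quandle Q op" and "x \<in> Q" "z \<in> Q" "op x z = y"
  shows "ldiv Q op x y = z"
proof -
  have "inj_on (op x) Q" using q \<open>x \<in> Q\<close> by (simp add: quandle_def bij_betw_def)
  then show ?thesis unfolding ldiv_def using assms by (blast dest: inj_onD)
qed

lemma ldiv_closed_op_ldiv:
  assumes q: "quandle Q op" and x: "x \<in> Q" and y: "y \<in> Q"
  shows "ldiv Q op x y \<in> Q" and "op x (ldiv Q op x y) = y"
proof -
  have "y \<in> op x ` Q" using q x y by (simp add: quandle_def bij_betw_def)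
  then obtain z where "z \<in> Q" "op x z = y" by blast
  then show "ldiv Q op x y \<in> Q" and "op x (ldiv Q op x y) = y" using ldiv_eqI[OF q x] by simp_all
qed

lemma Lt_apply: "x \<in> Q \<Longrightarrow> Lt Q op a x = op a x"
  by (simp add: Lt_def)

lemma Lt_in_BijGroup: "quandle Q op \<Longrightarrow> x \<in> Q \<Longrightarrow> Lt Q op x \<in> carrier (BijGroup Q)"
  unfolding BijGroup_def Bij_def Lt_def quandle_def
  by (auto intro: bij_betw_cong[THEN iffD1])

lemma inv_Lt_apply:
  assumes q: "quandle Q op" and a: "a \<in> Q" and x: "x \<in> Q"
  shows "(inv\<^bsub>BijGroup Q\<^esub> Lt Q op a) x = ldiv Q op a x"
proof -
  have L: "Lt Q op a \<in> carrier (BijGroup Q)" using Lt_in_BijGroup[OF q a] .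
  have "(inv\<^bsub>BijGroup Q\<^esub> Lt Q op a) x \<in> Q"
    using BijGroup_apply_closed[OF group.inv_closed[OF group_BijGroup L] x] .
  then show ?thesis
    using ldiv_eqI[OF q a] BijGroup_inv_apply(1)[OF L x] by (simp add: Lt_apply)
qed

lemma Lt_op:
  assumes q: "quandle Q op" and x: "x \<in> Q" and y: "y \<in> Q"
  shows "Lt Q op (op x y) = Lt Q op x \<otimes>\<^bsub>BijGroup Q\<^esub> Lt Q op y \<otimes>\<^bsub>BijGroup Q\<^esub> inv\<^bsub>BijGroup Q\<^esub> Lt Q op x"
proof -
  interpret group "BijGroup Q" by (rule group_BijGroup)
  have Lx: "Lt Q op x \<in> carrier (BijGroup Q)" and Ly: "Lt Q op y \<in> carrier (BijGroup Q)"
    using Lt_in_BijGroup[OF q] x y by auto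
  show ?thesis
  proof (rule BijGroup_eqI)
    fix z assume z: "z \<in> Q"
    define w where "w = ldiv Q op x z"
    have w: "w \<in> Q" "op x w = z" using ldiv_closed_op_ldiv[OF q x z] by (simp_all add: w_def)
    have "(Lt Q op x \<otimes>\<^bsub>BijGroup Q\<^esub> Lt Q op y \<otimes>\<^bsub>BijGroup Q\<^esub> inv\<^bsub>BijGroup Q\<^esub> Lt Q op x) z
        = op x (op y w)"
      using Lx Ly z w quandle_closed[OF q y w(1)]
      by (simp add: BijGroup_mult_apply inv_Lt_apply[OF q x z] Lt_apply w_def)
    also have "\<dots> = op (op x y) z"
      using q x y w by (simp add: quandle_def)
    finally show "Lt Q op (op x y) z = (Lt Q op x \<otimes>\<^bsub>BijGroup Q\<^esub> Lt Q op y \<otimes>\<^bsub>BijGroup Q\<^esub> inv\<^bsub>BijGroup Q\<^esub> Lt Q op x) z"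
      using z by (simp add: Lt_apply)
  next
    show "Lt Q op (op x y) \<in> carrier (BijGroup Q)"
      using Lt_in_BijGroup[OF q quandle_closed[OF q x y]] .
    show "Lt Q op x \<otimes>\<^bsub>BijGroup Q\<^esub> Lt Q op y \<otimes>\<^bsub>BijGroup Q\<^esub> inv\<^bsub>BijGroup Q\<^esub> Lt Q op x \<in> carrier (BijGroup Q)"
      using Lx Ly by (intro m_closed inv_closed)
  qed
qed

abbreviation displ :: "'a set \<Rightarrow> ('a \<Rightarrow> 'a \<Rightarrow> 'a) \<Rightarrow> 'a \<Rightarrow> 'a \<Rightarrow> ('a \<Rightarrow> 'a)" where
  "displ Q op x y \<equiv> Lt Q op x \<otimes>\<^bsub>BijGroup Q\<^esub> inv\<^bsub>BijGroup Q\<^esub> Lt Q op y"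

lemma displ_apply:
  assumes q: "quandle Q op" and a: "a \<in> Q" and b: "b \<in> Q" and z: "z \<in> Q"
  shows "displ Q op a b z = op a (ldiv Q op b z)"
proof -
  have La: "Lt Q op a \<in> carrier (BijGroup Q)" and Lb: "Lt Q op b \<in> carrier (BijGroup Q)"
    using Lt_in_BijGroup[OF q] a b by auto
  have "displ Q op a b z = Lt Q op a ((inv\<^bsub>BijGroup Q\<^esub> Lt Q op b) z)"
    using BijGroup_mult_apply[OF La group.inv_closed[OF group_BijGroup Lb] z] .
  also have "\<dots> = op a (ldiv Q op b z)"
    using inv_Lt_apply[OF q b z] ldiv_closed_op_ldiv[OF q b z] by (simp add: Lt_apply)
  finally show ?thesis .
qed

lemma displ_in_BijGroup:
  assumes q: "quandle Q op" and x: "x \<in> Q" and y: "y \<in> Q"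
  shows "displ Q op x y \<in> carrier (BijGroup Q)"
proof -
  interpret group "BijGroup Q" by (rule group_BijGroup)
  show ?thesis by (rule m_closed[OF Lt_in_BijGroup[OF q x] inv_closed[OF Lt_in_BijGroup[OF q y]]])
qed

lemma displ_set_subset_BijGroup:
  assumes q: "quandle Q op"
  shows "{displ Q op x y | x y. x \<in> Q \<and> y \<in> Q \<and> P x y} \<subseteq> carrier (BijGroup Q)"
proof
  fix h assume "h \<in> {displ Q op x y | x y. x \<in> Q \<and> y \<in> Q \<and> P x y}"
  then obtain x y where "x \<in> Q" "y \<in> Q" "h = displ Q op x y" by blast
  then show "h \<in> carrier (BijGroup Q)" using displ_in_BijGroup[OF q] by simp
qed

definition LMlt_group :: "'a set \<Rightarrow> ('a \<Rightarrow> 'a \<Rightarrow> 'a) \<Rightarrow> ('a \<Rightarrow> 'a) monoid" where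
  "LMlt_group Q op = (BijGroup Q)\<lparr>carrier := LMlt Q op\<rparr>"

lemma subgroup_LMlt: "quandle Q op \<Longrightarrow> subgroup (LMlt Q op) (BijGroup Q)"
  unfolding LMlt_def using Lt_in_BijGroup
  by (intro group.generate_is_subgroup group_BijGroup) auto

lemma group_LMlt_group: "quandle Q op \<Longrightarrow> group (LMlt_group Q op)"
  unfolding LMlt_group_def by (intro group.subgroup_imp_group group_BijGroup subgroup_LMlt)

lemma Lt_in_LMlt: "x \<in> Q \<Longrightarrow> Lt Q op x \<in> LMlt Q op"
  unfolding LMlt_def by (rule generate.incl) simp

lemma subgroup_Dis: "quandle Q op \<Longrightarrow> subgroup (Dis Q op) (BijGroup Q)"
  unfolding Dis_def using displ_set_subset_BijGroup[where P = "\<lambda>_ _. True"]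
  by (intro group.generate_is_subgroup group_BijGroup) simp

lemma subgroup_Dis_rel: "quandle Q op \<Longrightarrow> subgroup (Dis_rel Q op \<alpha>) (BijGroup Q)"
  unfolding Dis_rel_def by (intro group.generate_is_subgroup group_BijGroup displ_set_subset_BijGroup)

lemma displ_in_Dis: "x \<in> Q \<Longrightarrow> y \<in> Q \<Longrightarrow> displ Q op x y \<in> Dis Q op"
  unfolding Dis_def by (rule generate.incl) auto

lemma displ_in_Dis_rel: "(x, y) \<in> \<alpha> \<Longrightarrow> x \<in> Q \<Longrightarrow> y \<in> Q \<Longrightarrow> displ Q op x y \<in> Dis_rel Q op \<alpha>"
  unfolding Dis_rel_def by (rule generate.incl) auto

lemma Dis_rel_subset_Dis: "Dis_rel Q op \<alpha> \<subseteq> Dis Q op"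
  unfolding Dis_rel_def Dis_def by (intro group.mono_generate group_BijGroup) auto

lemma Dis_subset_LMlt:
  assumes q: "quandle Q op"
  shows "Dis Q op \<subseteq> LMlt Q op"
  unfolding Dis_def
proof (rule group.generate_subgroup_incl[OF group_BijGroup _ subgroup_LMlt[OF q]])
  show "{displ Q op x y | x y. x \<in> Q \<and> y \<in> Q} \<subseteq> LMlt Q op"
  proof
    fix h assume "h \<in> {displ Q op x y | x y. x \<in> Q \<and> y \<in> Q}"
    then obtain x y where "x \<in> Q" "y \<in> Q" "h = displ Q op x y" by blast
    then show "h \<in> LMlt Q op"
      using Lt_in_LMlt subgroup.m_closed[OF subgroup_LMlt[OF q]]
        subgroup.m_inv_closed[OF subgroup_LMlt[OF q]] by metis
  qed
qed

lemma LMlt_apply_eq_Dis_apply: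
  assumes q: "quandle Q op" and g: "g \<in> LMlt Q op" and x: "x \<in> Q"
  shows "\<exists>d\<in>Dis Q op. g x = d x"
proof -
  have "LMlt Q op \<subseteq> {g \<in> carrier (BijGroup Q). \<forall>x\<in>Q. \<exists>d\<in>Dis Q op. g x = d x}"
    unfolding LMlt_def
  proof (rule group.generate_subgroup_incl[OF group_BijGroup _ pointwise_subgroup[OF subgroup_Dis[OF q]]])
    show "Lt Q op ` Q \<subseteq> {g \<in> carrier (BijGroup Q). \<forall>x\<in>Q. \<exists>d\<in>Dis Q op. g x = d x}"
    proof
      fix g assume "g \<in> Lt Q op ` Q"
      then obtain z where z: "z \<in> Q" and g: "g = Lt Q op z" by blast
      have "g y = displ Q op z y y" if y: "y \<in> Q" for y
      proof -
        have "ldiv Q op y y = y" using ldiv_eqI[OF q y y] q y by (simp add: quandle_def)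
        then show ?thesis using displ_apply[OF q z y y] g y by (simp add: Lt_apply)
      qed
      then show "g \<in> {g \<in> carrier (BijGroup Q). \<forall>x\<in>Q. \<exists>d\<in>Dis Q op. g x = d x}"
        using Lt_in_BijGroup[OF q z] displ_in_Dis[OF z] g by blast
    qed
  qed
  then show ?thesis using g x by blast
qed

lemma connected_Dis_transitive:
  assumes q: "quandle Q op" and conn: "connected_quandle Q op" and x: "x \<in> Q" and y: "y \<in> Q"
  shows "\<exists>d\<in>Dis Q op. d x = y"
proof -
  obtain g where "g \<in> LMlt Q op" "g x = y" using conn x y unfolding connected_quandle_def by blast
  then show ?thesis using LMlt_apply_eq_Dis_apply[OF q _ x] by metis
qed

lemma LMlt_conj_Lt:
  assumes q: "quandle Q op" and g: "g \<in> LMlt Q op" and a: "a \<in> Q"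
  shows "g \<otimes>\<^bsub>BijGroup Q\<^esub> Lt Q op a \<otimes>\<^bsub>BijGroup Q\<^esub> inv\<^bsub>BijGroup Q\<^esub> g = Lt Q op (g a)"
proof -
  let ?C = "{g \<in> carrier (BijGroup Q).
    \<forall>a\<in>Q. g \<otimes>\<^bsub>BijGroup Q\<^esub> Lt Q op a \<otimes>\<^bsub>BijGroup Q\<^esub> inv\<^bsub>BijGroup Q\<^esub> g = Lt Q op (g a)}"
  have "Lt Q op ` Q \<subseteq> ?C" using Lt_in_BijGroup[OF q] Lt_op[OF q] by (auto simp: Lt_apply)
  then have "LMlt Q op \<subseteq> ?C"
    unfolding LMlt_def using conj_equivariant_subgroup[of "Lt Q op" Q] Lt_in_BijGroup[OF q]
    by (intro group.generate_subgroup_incl[OF group_BijGroup]) auto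
  then show ?thesis using g a by blast
qed

lemma LMlt_preserves_congruence:
  assumes q: "quandle Q op" and c: "congruence Q op \<alpha>"
    and g: "g \<in> LMlt Q op" and xy: "(x, y) \<in> \<alpha>"
  shows "(g x, g y) \<in> \<alpha>"
proof -
  have eq: "equiv Q \<alpha>" using c by (simp add: congruence_def)
  let ?C = "{g \<in> carrier (BijGroup Q). \<forall>x\<in>Q. \<forall>y\<in>Q. (g x, g y) \<in> \<alpha> \<longleftrightarrow> (x, y) \<in> \<alpha>}"
  have "Lt Q op ` Q \<subseteq> ?C"
  proof
    fix g assume "g \<in> Lt Q op ` Q"
    then obtain z where z: "z \<in> Q" and g: "g = Lt Q op z" by blast
    have "(op z x, op z y) \<in> \<alpha> \<longleftrightarrow> (x, y) \<in> \<alpha>" if x: "x \<in> Q" and y: "y \<in> Q" for x y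
    proof
      have zz: "(z, z) \<in> \<alpha>" using eq z by (simp add: equiv_def refl_on_def)
      show "(op z x, op z y) \<in> \<alpha> \<Longrightarrow> (x, y) \<in> \<alpha>"
        using c zz ldiv_eqI[OF q z x refl] ldiv_eqI[OF q z y refl] by (metis congruence_def)
      show "(x, y) \<in> \<alpha> \<Longrightarrow> (op z x, op z y) \<in> \<alpha>"
        using c zz by (simp add: congruence_def)
    qed
    then show "g \<in> ?C" using Lt_in_BijGroup[OF q z] g by (simp add: Lt_apply)
  qed
  then have "LMlt Q op \<subseteq> ?C"
    unfolding LMlt_def
    by (rule group.generate_subgroup_incl[OF group_BijGroup _ relation_preserving_subgroup])
  moreover have "x \<in> Q" "y \<in> Q" using eq xy by (auto simp: equiv_def refl_on_def)
  ultimately show ?thesis using g xy by blast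
qed

lemma Dis_rel_class_preserving:
  assumes q: "quandle Q op" and c: "congruence Q op \<alpha>"
    and h: "h \<in> Dis_rel Q op \<alpha>" and x: "x \<in> Q"
  shows "(h x, x) \<in> \<alpha>"
proof -
  have eq: "equiv Q \<alpha>" using c by (simp add: congruence_def)
  have "Dis_rel Q op \<alpha> \<subseteq> {g \<in> carrier (BijGroup Q). \<forall>x\<in>Q. (g x, x) \<in> \<alpha>}"
    unfolding Dis_rel_def
  proof (rule group.generate_subgroup_incl[OF group_BijGroup _ class_preserving_subgroup[OF eq]])
    show "{displ Q op a b | a b. a \<in> Q \<and> b \<in> Q \<and> (a, b) \<in> \<alpha>}
        \<subseteq> {g \<in> carrier (BijGroup Q). \<forall>x\<in>Q. (g x, x) \<in> \<alpha>}"
    proof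
      fix g assume "g \<in> {displ Q op a b | a b. a \<in> Q \<and> b \<in> Q \<and> (a, b) \<in> \<alpha>}"
      then obtain a b where ab: "a \<in> Q" "b \<in> Q" "(a, b) \<in> \<alpha>" and g: "g = displ Q op a b"
        by blast
      have "(g z, z) \<in> \<alpha>" if z: "z \<in> Q" for z
      proof -
        define w where "w = ldiv Q op b z"
        have w: "w \<in> Q" "op b w = z" using ldiv_closed_op_ldiv[OF q ab(2) z] by (simp_all add: w_def)
        have "(w, w) \<in> \<alpha>" using eq w(1) by (simp add: equiv_def refl_on_def)
        then have "(op a w, op b w) \<in> \<alpha>" using c ab(3) by (simp add: congruence_def)
        then show ?thesis using g displ_apply[OF q ab(1,2) z] w(2) by (simp add: w_def)
      qed
      then show "g \<in> {g \<in> carrier (BijGroup Q). \<forall>x\<in>Q. (g x, x) \<in> \<alpha>}"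
        using displ_in_BijGroup[OF q ab(1,2)] g by simp
    qed
  qed
  then show ?thesis using h x by blast
qed

lemma Dis_rel_normal:
  assumes q: "quandle Q op" and c: "congruence Q op \<alpha>"
  shows "Dis_rel Q op \<alpha> \<lhd> LMlt_group Q op"
proof -
  interpret B: group "BijGroup Q" by (rule group_BijGroup)
  interpret L: group "LMlt_group Q op" by (rule group_LMlt_group[OF q])
  let ?gens = "{displ Q op a b | a b. a \<in> Q \<and> b \<in> Q \<and> (a, b) \<in> \<alpha>}"
  have gens: "?gens \<subseteq> LMlt Q op"
    using Dis_rel_subset_Dis Dis_subset_LMlt[OF q] generate.incl[of _ ?gens]
    unfolding Dis_rel_def by blast
  have "Dis_rel Q op \<alpha> = generate (LMlt_group Q op) ?gens"
    unfolding Dis_rel_def LMlt_group_def using B.generate_consistent[OF gens subgroup_LMlt[OF q]] by simp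
  moreover have "generate (LMlt_group Q op) ?gens \<lhd> LMlt_group Q op"
  proof (rule L.normal_generateI)
    show "?gens \<subseteq> carrier (LMlt_group Q op)" using gens by (simp add: LMlt_group_def)
  next
    fix h g assume h: "h \<in> ?gens" and g: "g \<in> carrier (LMlt_group Q op)"
    then obtain a b where a: "a \<in> Q" and b: "b \<in> Q" and ab: "(a, b) \<in> \<alpha>"
      and h: "h = displ Q op a b" by blast
    have gL: "g \<in> LMlt Q op" using g by (simp add: LMlt_group_def)
    have gc: "g \<in> carrier (BijGroup Q)" using subgroup.mem_carrier[OF subgroup_LMlt[OF q] gL] .
    have "g \<otimes>\<^bsub>LMlt_group Q op\<^esub> h \<otimes>\<^bsub>LMlt_group Q op\<^esub> inv\<^bsub>LMlt_group Q op\<^esub> g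
        = g \<otimes>\<^bsub>BijGroup Q\<^esub> h \<otimes>\<^bsub>BijGroup Q\<^esub> inv\<^bsub>BijGroup Q\<^esub> g"
      using B.m_inv_consistent[OF subgroup_LMlt[OF q] gL] by (simp add: LMlt_group_def)
    also have "\<dots> = displ Q op (g a) (g b)"
      using B.conj_m_inv[OF gc Lt_in_BijGroup[OF q a] Lt_in_BijGroup[OF q b]]
        LMlt_conj_Lt[OF q gL a] LMlt_conj_Lt[OF q gL b] h by simp
    finally show "g \<otimes>\<^bsub>LMlt_group Q op\<^esub> h \<otimes>\<^bsub>LMlt_group Q op\<^esub> inv\<^bsub>LMlt_group Q op\<^esub> g \<in> ?gens"
      using BijGroup_apply_closed[OF gc] a b LMlt_preserves_congruence[OF q c gL ab] by blast
  qed
  ultimately show ?thesis by simp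
qed

lemma hom_LMlt_group_Lt:
  assumes q: "quandle Q op" and K: "group K" and \<pi>: "\<pi> \<in> hom (LMlt_group Q op) K"
    and a: "a \<in> Q" and b: "b \<in> Q"
  shows "\<pi> (Lt Q op (op a b)) = \<pi> (Lt Q op a) \<otimes>\<^bsub>K\<^esub> \<pi> (Lt Q op b) \<otimes>\<^bsub>K\<^esub> inv\<^bsub>K\<^esub> \<pi> (Lt Q op a)"
    and "\<pi> (displ Q op a b) = \<pi> (Lt Q op a) \<otimes>\<^bsub>K\<^esub> inv\<^bsub>K\<^esub> \<pi> (Lt Q op b)"
proof -
  interpret L: group "LMlt_group Q op" by (rule group_LMlt_group[OF q])
  interpret \<pi>: group_hom "LMlt_group Q op" K \<pi>
    using K \<pi> by (simp add: group_hom_def group_hom_axioms_def)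
  have La: "Lt Q op a \<in> carrier (LMlt_group Q op)" and Lb: "Lt Q op b \<in> carrier (LMlt_group Q op)"
    using Lt_in_LMlt a b by (simp_all add: LMlt_group_def)
  have inv: "inv\<^bsub>BijGroup Q\<^esub> Lt Q op c = inv\<^bsub>LMlt_group Q op\<^esub> Lt Q op c" if "c \<in> Q" for c
    using group.m_inv_consistent[OF group_BijGroup subgroup_LMlt[OF q] Lt_in_LMlt[OF that]]
    by (simp add: LMlt_group_def)
  have "Lt Q op (op a b) = Lt Q op a \<otimes>\<^bsub>LMlt_group Q op\<^esub> Lt Q op b \<otimes>\<^bsub>LMlt_group Q op\<^esub> inv\<^bsub>LMlt_group Q op\<^esub> Lt Q op a"
    using Lt_op[OF q a b] inv[OF a] by (simp add: LMlt_group_def)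
  then show "\<pi> (Lt Q op (op a b)) = \<pi> (Lt Q op a) \<otimes>\<^bsub>K\<^esub> \<pi> (Lt Q op b) \<otimes>\<^bsub>K\<^esub> inv\<^bsub>K\<^esub> \<pi> (Lt Q op a)"
    using La Lb by simp
  have "displ Q op a b = Lt Q op a \<otimes>\<^bsub>LMlt_group Q op\<^esub> inv\<^bsub>LMlt_group Q op\<^esub> Lt Q op b"
    using inv[OF b] by (simp add: LMlt_group_def)
  then show "\<pi> (displ Q op a b) = \<pi> (Lt Q op a) \<otimes>\<^bsub>K\<^esub> inv\<^bsub>K\<^esub> \<pi> (Lt Q op b)"
    using La Lb by simp
qed

lemma Dis_equivariant:
  assumes q: "quandle Q op" and K: "group K" and \<pi>: "\<pi> \<in> hom (LMlt_group Q op) K"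
    and e: "e \<in> Q \<rightarrow> carrier K"
    and e_op: "\<And>x y. x \<in> Q \<Longrightarrow> y \<in> Q \<Longrightarrow>
      e (op x y) = \<pi> (Lt Q op x) \<otimes>\<^bsub>K\<^esub> inv\<^bsub>K\<^esub> \<pi> (Lt Q op y) \<otimes>\<^bsub>K\<^esub> e y"
    and d: "d \<in> Dis Q op" and x: "x \<in> Q"
  shows "e (d x) = \<pi> d \<otimes>\<^bsub>K\<^esub> e x"
proof -
  interpret K: group K by (rule K)
  have \<pi>L: "\<pi> (Lt Q op a) \<in> carrier K" if "a \<in> Q" for a
    using \<pi> Lt_in_LMlt[OF that] by (simp add: hom_def LMlt_group_def Pi_iff)
  let ?E = "{g \<in> LMlt Q op. \<forall>x\<in>Q. e (g x) = \<pi> g \<otimes>\<^bsub>K\<^esub> e x}"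
  have "Dis Q op \<subseteq> ?E"
    unfolding Dis_def
  proof (rule group.generate_subgroup_incl[OF group_BijGroup])
    show "subgroup ?E (BijGroup Q)"
      using equivariant_subgroup[OF subgroup_LMlt[OF q] K _ e] \<pi> by (simp add: LMlt_group_def)
    show "{displ Q op a b | a b. a \<in> Q \<and> b \<in> Q} \<subseteq> ?E"
    proof
      fix g assume "g \<in> {displ Q op a b | a b. a \<in> Q \<and> b \<in> Q}"
      then obtain a b where a: "a \<in> Q" and b: "b \<in> Q" and g: "g = displ Q op a b" by blast
      have "e (g z) = \<pi> g \<otimes>\<^bsub>K\<^esub> e z" if z: "z \<in> Q" for z
      proof -
        define w where "w = ldiv Q op b z"
        have w: "w \<in> Q" "op b w = z" using ldiv_closed_op_ldiv[OF q b z] by (simp_all add: w_def)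
        have ew: "e w \<in> carrier K" using e w(1) by blast
        have "e (g z) = \<pi> (Lt Q op a) \<otimes>\<^bsub>K\<^esub> inv\<^bsub>K\<^esub> \<pi> (Lt Q op w) \<otimes>\<^bsub>K\<^esub> e w"
          using g displ_apply[OF q a b z] e_op[OF a w(1)] by (simp add: w_def)
        also have "\<dots> = \<pi> (Lt Q op a) \<otimes>\<^bsub>K\<^esub> inv\<^bsub>K\<^esub> \<pi> (Lt Q op b)
            \<otimes>\<^bsub>K\<^esub> (\<pi> (Lt Q op b) \<otimes>\<^bsub>K\<^esub> inv\<^bsub>K\<^esub> \<pi> (Lt Q op w) \<otimes>\<^bsub>K\<^esub> e w)"
          using \<pi>L[OF a] \<pi>L[OF b] \<pi>L[OF w(1)] ew by (simp add: K.m_assoc)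
        also have "\<dots> = \<pi> g \<otimes>\<^bsub>K\<^esub> e z"
          using e_op[OF b w(1)] w(2) hom_LMlt_group_Lt(2)[OF q K \<pi> a b] g by simp
        finally show ?thesis .
      qed
      moreover have "g \<in> LMlt Q op" using g displ_in_Dis[OF a b] Dis_subset_LMlt[OF q] by blast
      ultimately show "g \<in> ?E" by simp
    qed
  qed
  then show ?thesis using d x by blast
qed

section \<open>Group-valued cocycles\<close>

definition group_cocycle :: "'x set \<Rightarrow> ('x \<Rightarrow> 'x \<Rightarrow> 'x) \<Rightarrow> ('k, 'm) monoid_scheme \<Rightarrow> ('x \<Rightarrow> 'x \<Rightarrow> 'k) \<Rightarrow> bool" where
  "group_cocycle Q op K \<theta> \<longleftrightarrow>
     (\<forall>A\<in>Q. \<forall>B\<in>Q. \<theta> A B \<in> carrier K) \<and>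
     (\<forall>A\<in>Q. \<forall>B\<in>Q. \<forall>C\<in>Q. \<theta> (op A B) (op A C) \<otimes>\<^bsub>K\<^esub> \<theta> A C = \<theta> A (op B C) \<otimes>\<^bsub>K\<^esub> \<theta> B C) \<and>
     (\<forall>A\<in>Q. \<theta> A A = \<one>\<^bsub>K\<^esub>)"

lemma quandle_cocycle_iff_group_cocycle:
  "quandle_cocycle Q op S \<theta> \<longleftrightarrow> group_cocycle Q op (BijGroup S) \<theta>"
  by (simp add: quandle_cocycle_def group_cocycle_def)

lemma (in group_hom) group_cocycle_hom:
  assumes \<theta>: "group_cocycle Q op G \<theta>" and op: "op \<in> Q \<rightarrow> Q \<rightarrow> Q"
  shows "group_cocycle Q op H (\<lambda>A B. h (\<theta> A B))"
proof -
  have c: "\<theta> A B \<in> carrier G" if "A \<in> Q" "B \<in> Q" for A B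
    using \<theta> that by (simp add: group_cocycle_def)
  show ?thesis
    unfolding group_cocycle_def
  proof (intro conjI ballI)
    fix A B C assume A: "A \<in> Q" and B: "B \<in> Q" and C: "C \<in> Q"
    have "h (\<theta> (op A B) (op A C)) \<otimes>\<^bsub>H\<^esub> h (\<theta> A C) = h (\<theta> (op A B) (op A C) \<otimes> \<theta> A C)"
      using c op A B C by (simp add: Pi_iff)
    also have "\<dots> = h (\<theta> A (op B C) \<otimes> \<theta> B C)"
      using \<theta> A B C by (simp add: group_cocycle_def)
    also have "\<dots> = h (\<theta> A (op B C)) \<otimes>\<^bsub>H\<^esub> h (\<theta> B C)"
      using c op A B C by (simp add: Pi_iff)
    finally show "h (\<theta> (op A B) (op A C)) \<otimes>\<^bsub>H\<^esub> h (\<theta> A C) = h (\<theta> A (op B C)) \<otimes>\<^bsub>H\<^esub> h (\<theta> B C)" .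
  qed (use c \<theta> in \<open>simp_all add: group_cocycle_def\<close>)
qed

lemma (in group) conj_hom_group_cocycle:
  assumes \<psi>: "\<psi> \<in> Q \<rightarrow> carrier G" and op: "op \<in> Q \<rightarrow> Q \<rightarrow> Q"
    and \<psi>_op: "\<And>A B. A \<in> Q \<Longrightarrow> B \<in> Q \<Longrightarrow> \<psi> (op A B) = \<psi> A \<otimes> \<psi> B \<otimes> inv \<psi> A"
  shows "group_cocycle Q op G (\<lambda>A B. \<psi> A \<otimes> inv \<psi> B)"
proof -
  have c: "\<psi> A \<in> carrier G" if "A \<in> Q" for A using \<psi> that by blast
  show ?thesis
    unfolding group_cocycle_def
  proof (intro conjI ballI)
    fix A B C assume A: "A \<in> Q" and B: "B \<in> Q" and C: "C \<in> Q"
    have "\<psi> (op A B) \<otimes> inv \<psi> (op A C) \<otimes> (\<psi> A \<otimes> inv \<psi> C) = \<psi> A \<otimes> \<psi> B \<otimes> inv \<psi> C \<otimes> inv \<psi> C"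
      using c[OF A] c[OF B] c[OF C] \<psi>_op[OF A B] \<psi>_op[OF A C] by (simp add: inv_mult_group m_assoc)
    also have "\<dots> = \<psi> A \<otimes> inv \<psi> (op B C) \<otimes> (\<psi> B \<otimes> inv \<psi> C)"
      using c[OF A] c[OF B] c[OF C] \<psi>_op[OF B C] by (simp add: inv_mult_group m_assoc)
    finally show "\<psi> (op A B) \<otimes> inv \<psi> (op A C) \<otimes> (\<psi> A \<otimes> inv \<psi> C) = \<psi> A \<otimes> inv \<psi> (op B C) \<otimes> (\<psi> B \<otimes> inv \<psi> C)" .
  qed (use c in simp_all)
qed

text \<open>simply_connected only quantifies over coefficient sets of natural numbers, so the
  regular representation is transported along an injection of carrier G into nat.\<close>

lemma (in group) countable_regular_representation:
  assumes "countable (carrier G)"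
  obtains f and S :: "nat set" and \<rho> where "bij_betw f (carrier G) S" and "\<rho> \<in> hom G (BijGroup S)"
    and "\<And>k k'. k \<in> carrier G \<Longrightarrow> k' \<in> carrier G \<Longrightarrow> \<rho> k (f k') = f (k \<otimes> k')"
proof -
  obtain f :: "'a \<Rightarrow> nat" where inj: "inj_on f (carrier G)" using assms by (rule countableE)
  define S where "S = f ` carrier G"
  define g where "g = inv_into (carrier G) f"
  have bij: "bij_betw f (carrier G) S" using inj by (simp add: S_def bij_betw_def)
  have g: "g m \<in> carrier G" "f (g m) = m" if "m \<in> S" for m
    using that by (auto simp: S_def g_def inv_into_into f_inv_into_f)
  have gf: "g (f k) = k" if "k \<in> carrier G" for k using inj that by (simp add: g_def)
  define \<rho> where "\<rho> k = (\<lambda>m\<in>S. f (k \<otimes> g m))" for k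
  have \<rho>_f: "\<rho> k (f k') = f (k \<otimes> k')" if "k' \<in> carrier G" for k k'
    using that gf by (simp add: \<rho>_def S_def)
  have \<rho>_S: "\<rho> k m \<in> S" if "k \<in> carrier G" "m \<in> S" for k m
    using that g by (simp add: \<rho>_def S_def)
  have \<rho>_inv: "\<rho> (inv k) (\<rho> k m) = m" if k: "k \<in> carrier G" and m: "m \<in> S" for k m
  proof -
    have "\<rho> (inv k) (\<rho> k m) = \<rho> (inv k) (f (k \<otimes> g m))" using m by (simp add: \<rho>_def)
    also have "\<dots> = f (inv k \<otimes> (k \<otimes> g m))" using \<rho>_f k g[OF m] by simp
    finally show ?thesis using k g[OF m] by simp
  qed
  have \<rho>_carrier: "\<rho> k \<in> carrier (BijGroup S)" if k: "k \<in> carrier G" for k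
  proof -
    have "bij_betw (\<rho> k) S S"
      by (rule bij_betw_byWitness[where f' = "\<rho> (inv k)"])
        (use k \<rho>_inv[of k] \<rho>_inv[of "inv k"] \<rho>_S in auto)
    then show ?thesis by (simp add: BijGroup_def Bij_def \<rho>_def)
  qed
  have "\<rho> (k \<otimes> k') = \<rho> k \<otimes>\<^bsub>BijGroup S\<^esub> \<rho> k'" if k: "k \<in> carrier G" and k': "k' \<in> carrier G" for k k'
  proof (rule BijGroup_eqI)
    fix m assume "m \<in> S"
    then show "\<rho> (k \<otimes> k') m = (\<rho> k \<otimes>\<^bsub>BijGroup S\<^esub> \<rho> k') m"
      using k k' g \<rho>_carrier \<rho>_f
      by (simp add: BijGroup_mult_apply) (simp add: \<rho>_def m_assoc)
  next
    show "\<rho> (k \<otimes> k') \<in> carrier (BijGroup S)" using k k' by (simp add: \<rho>_carrier)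
    show "\<rho> k \<otimes>\<^bsub>BijGroup S\<^esub> \<rho> k' \<in> carrier (BijGroup S)"
      by (rule monoid.m_closed[OF group.is_monoid[OF group_BijGroup] \<rho>_carrier[OF k] \<rho>_carrier[OF k']])
  qed
  then have "\<rho> \<in> hom G (BijGroup S)" using \<rho>_carrier by (simp add: hom_def)
  then show ?thesis using \<rho>_f by (intro that[OF bij])
qed

lemma (in group) simply_connected_group_cocycle_trivial:
  assumes sc: "simply_connected Q op" and op: "op \<in> Q \<rightarrow> Q \<rightarrow> Q"
    and countable: "countable (carrier G)" and \<theta>: "group_cocycle Q op G \<theta>"
  shows "\<exists>e\<in>Q \<rightarrow> carrier G. \<forall>A\<in>Q. \<forall>B\<in>Q. e (op A B) = \<theta> A B \<otimes> e B"
proof -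
  obtain f and S :: "nat set" and \<rho> where f: "bij_betw f (carrier G) S" and \<rho>: "\<rho> \<in> hom G (BijGroup S)"
    and \<rho>_f: "\<And>k k'. k \<in> carrier G \<Longrightarrow> k' \<in> carrier G \<Longrightarrow> \<rho> k (f k') = f (k \<otimes> k')"
    using countable_regular_representation[OF countable] by metis
  interpret B: group "BijGroup S" by (rule group_BijGroup)
  interpret \<rho>: group_hom G "BijGroup S" \<rho> by (simp add: group_hom_def group_hom_axioms_def \<rho>)
  have \<theta>c: "\<theta> A B \<in> carrier G" if "A \<in> Q" "B \<in> Q" for A B
    using \<theta> that by (simp add: group_cocycle_def)
  have "quandle_cocycle Q op S (\<lambda>A B. \<rho> (\<theta> A B))"
    using \<rho>.group_cocycle_hom[OF \<theta> op] by (simp add: quandle_cocycle_iff_group_cocycle)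
  then have "cohomologous_trivial Q op S (\<lambda>A B. \<rho> (\<theta> A B))"
    using sc by (simp add: simply_connected_def)
  then obtain \<gamma> where \<gamma>: "(\<forall>A\<in>Q. \<gamma> A \<in> carrier (BijGroup S)) \<and>
      (\<forall>A\<in>Q. \<forall>B\<in>Q. \<rho> (\<theta> A B) = \<gamma> (op A B) \<otimes>\<^bsub>BijGroup S\<^esub> inv\<^bsub>BijGroup S\<^esub> \<gamma> B)"
    unfolding cohomologous_trivial_def ..
  then have \<gamma>c: "\<And>A. A \<in> Q \<Longrightarrow> \<gamma> A \<in> carrier (BijGroup S)"
    and \<gamma>: "\<And>A B. A \<in> Q \<Longrightarrow> B \<in> Q \<Longrightarrow> \<rho> (\<theta> A B) = \<gamma> (op A B) \<otimes>\<^bsub>BijGroup S\<^esub> inv\<^bsub>BijGroup S\<^esub> \<gamma> B"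
    by simp_all
  define e where "e A = inv_into (carrier G) f (\<gamma> A (f \<one>))" for A
  have f1: "f \<one> \<in> S" using bij_betw_apply[OF f] by simp
  have \<gamma>_S: "\<gamma> A (f \<one>) \<in> S" if "A \<in> Q" for A using BijGroup_apply_closed[OF \<gamma>c[OF that] f1] .
  have e: "e A \<in> carrier G" "f (e A) = \<gamma> A (f \<one>)" if "A \<in> Q" for A
    using \<gamma>_S[OF that] f by (auto simp: e_def bij_betw_def inv_into_into f_inv_into_f)
  have "e (op A B) = \<theta> A B \<otimes> e B" if A: "A \<in> Q" and B: "B \<in> Q" for A B
  proof -
    have AB: "op A B \<in> Q" using op A B by blast
    have "\<gamma> (op A B) = \<rho> (\<theta> A B) \<otimes>\<^bsub>BijGroup S\<^esub> \<gamma> B"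
      using \<gamma>[OF A B] \<gamma>c[OF AB] \<gamma>c[OF B] \<rho>.hom_closed[OF \<theta>c[OF A B]]
      by (simp add: B.m_assoc)
    then have "f (e (op A B)) = \<rho> (\<theta> A B) (f (e B))"
      using e[OF AB] e[OF B] f1 \<gamma>c[OF B] \<rho>.hom_closed[OF \<theta>c[OF A B]]
      by (simp add: BijGroup_mult_apply)
    also have "\<dots> = f (\<theta> A B \<otimes> e B)" using \<rho>_f[OF \<theta>c[OF A B] e(1)[OF B]] .
    finally show ?thesis
      using f e[OF AB] e[OF B] \<theta>c[OF A B] by (simp add: bij_betw_def inj_on_def)
  qed
  moreover have "e \<in> Q \<rightarrow> carrier G" using e by simp
  ultimately show ?thesis by blast
qed

lemma quot_op_class:
  assumes c: "congruence Q op \<alpha>" and x: "x \<in> Q" and y: "y \<in> Q"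
  shows "quot_op Q op \<alpha> (\<alpha> `` {x}) (\<alpha> `` {y}) = \<alpha> `` {op x y}"
proof -
  have eq: "equiv Q \<alpha>" using c by (simp add: congruence_def)
  have rep: "(z, SOME u. u \<in> \<alpha> `` {z}) \<in> \<alpha>" if "z \<in> Q" for z
    using someI[of "\<lambda>u. u \<in> \<alpha> `` {z}" z] eq that by (simp add: equiv_def refl_on_def)
  have "(op x y, op (SOME u. u \<in> \<alpha> `` {x}) (SOME u. u \<in> \<alpha> `` {y})) \<in> \<alpha>"
    using c rep[OF x] rep[OF y] by (simp add: congruence_def)
  then show ?thesis by (simp add: quot_op_def equiv_class_eq[OF eq])
qed

lemma quot_op_closed:
  assumes q: "quandle Q op" and c: "congruence Q op \<alpha>"
  shows "quot_op Q op \<alpha> \<in> Q // \<alpha> \<rightarrow> Q // \<alpha> \<rightarrow> Q // \<alpha>"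
proof (intro Pi_I)
  fix A B assume "A \<in> Q // \<alpha>" "B \<in> Q // \<alpha>"
  then obtain x y where "x \<in> Q" "y \<in> Q" "A = \<alpha> `` {x}" "B = \<alpha> `` {y}" by (auto elim!: quotientE)
  then show "quot_op Q op \<alpha> A B \<in> Q // \<alpha>"
    using quot_op_class[OF c] quandle_closed[OF q] by (simp add: quotientI)
qed

lemma (in group) simply_connected_quotient_conj_cocycle:
  assumes q: "quandle Q op" and c: "congruence Q op \<alpha>"
    and sc: "simply_connected (Q // \<alpha>) (quot_op Q op \<alpha>)" and countable: "countable (carrier G)"
    and \<phi>: "\<phi> \<in> Q \<rightarrow> carrier G" and \<phi>_\<alpha>: "\<And>x y. (x, y) \<in> \<alpha> \<Longrightarrow> \<phi> x = \<phi> y"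
    and \<phi>_op: "\<And>x y. x \<in> Q \<Longrightarrow> y \<in> Q \<Longrightarrow> \<phi> (op x y) = \<phi> x \<otimes> \<phi> y \<otimes> inv \<phi> x"
  obtains e where "e \<in> Q \<rightarrow> carrier G" and "\<And>x y. (x, y) \<in> \<alpha> \<Longrightarrow> e x = e y"
    and "\<And>x y. x \<in> Q \<Longrightarrow> y \<in> Q \<Longrightarrow> e (op x y) = \<phi> x \<otimes> inv \<phi> y \<otimes> e y"
proof -
  have eq: "equiv Q \<alpha>" using c by (simp add: congruence_def)
  define \<psi> where "\<psi> A = the_elem (\<phi> ` A)" for A
  have \<psi>_class: "\<psi> (\<alpha> `` {x}) = \<phi> x" if x: "x \<in> Q" for x
  proof -
    have "x \<in> \<alpha> `` {x}" using eq x by (simp add: equiv_def refl_on_def)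
    moreover have "\<phi> y = \<phi> x" if "y \<in> \<alpha> `` {x}" for y using \<phi>_\<alpha> that by simp
    ultimately have "\<phi> ` (\<alpha> `` {x}) = {\<phi> x}" by blast
    then show ?thesis by (simp add: \<psi>_def)
  qed
  have \<psi>: "\<psi> \<in> Q // \<alpha> \<rightarrow> carrier G" using \<phi> \<psi>_class by (auto elim!: quotientE)
  have \<psi>_op: "\<psi> (quot_op Q op \<alpha> A B) = \<psi> A \<otimes> \<psi> B \<otimes> inv \<psi> A"
    if A: "A \<in> Q // \<alpha>" and B: "B \<in> Q // \<alpha>" for A B
  proof -
    obtain x y where "x \<in> Q" "y \<in> Q" "A = \<alpha> `` {x}" "B = \<alpha> `` {y}"
      using A B by (auto elim!: quotientE)
    then show ?thesis using \<psi>_class \<phi>_op quot_op_class[OF c] quandle_closed[OF q] by simp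
  qed
  have "group_cocycle (Q // \<alpha>) (quot_op Q op \<alpha>) G (\<lambda>A B. \<psi> A \<otimes> inv \<psi> B)"
    by (rule conj_hom_group_cocycle[OF \<psi> quot_op_closed[OF q c]]) (rule \<psi>_op)
  from simply_connected_group_cocycle_trivial[OF sc quot_op_closed[OF q c] countable this]
  obtain e' where e': "e' \<in> Q // \<alpha> \<rightarrow> carrier G"
    and e'_op: "\<forall>A\<in>Q // \<alpha>. \<forall>B\<in>Q // \<alpha>. e' (quot_op Q op \<alpha> A B) = \<psi> A \<otimes> inv \<psi> B \<otimes> e' B" ..
  define e where "e x = e' (\<alpha> `` {x})" for x
  show ?thesis
  proof
    show "e \<in> Q \<rightarrow> carrier G" using e' by (auto simp: e_def quotientI)
    show "e x = e y" if "(x, y) \<in> \<alpha>" for x y using equiv_class_eq[OF eq that] by (simp add: e_def)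
    show "e (op x y) = \<phi> x \<otimes> inv \<phi> y \<otimes> e y" if x: "x \<in> Q" and y: "y \<in> Q" for x y
    proof -
      have "e' (quot_op Q op \<alpha> (\<alpha> `` {x}) (\<alpha> `` {y})) = \<psi> (\<alpha> `` {x}) \<otimes> inv \<psi> (\<alpha> `` {y}) \<otimes> e y"
        using e'_op x y by (simp add: e_def quotientI)
      then show ?thesis using quot_op_class[OF c x y] \<psi>_class[OF x] \<psi>_class[OF y] by (simp add: e_def)
    qed
  qed
qed

section \<open>Congruences with a simply connected quotient\<close>

lemma Dis_class_preserving_in_kernel:
  assumes q: "quandle Q op" and c: "congruence Q op \<alpha>"
    and sc: "simply_connected (Q // \<alpha>) (quot_op Q op \<alpha>)"
    and K: "group K" and countable: "countable (carrier K)" and \<pi>: "\<pi> \<in> hom (LMlt_group Q op) K"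
    and \<pi>_Dis_rel: "\<And>h. h \<in> Dis_rel Q op \<alpha> \<Longrightarrow> \<pi> h = \<one>\<^bsub>K\<^esub>"
    and d: "d \<in> Dis Q op" and z: "z \<in> Q" and dz: "(d z, z) \<in> \<alpha>"
  shows "\<pi> d = \<one>\<^bsub>K\<^esub>"
proof -
  interpret K: group K by (rule K)
  define \<phi> where "\<phi> x = \<pi> (Lt Q op x)" for x
  have \<phi>: "\<phi> \<in> Q \<rightarrow> carrier K"
  proof
    fix x assume "x \<in> Q"
    then show "\<phi> x \<in> carrier K"
      using \<pi> Lt_in_LMlt[of x Q op] by (auto simp: \<phi>_def hom_def LMlt_group_def)
  qed
  have \<phi>_\<alpha>: "\<phi> x = \<phi> y" if xy: "(x, y) \<in> \<alpha>" for x y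
  proof -
    have x: "x \<in> Q" and y: "y \<in> Q" using c xy by (auto simp: congruence_def equiv_def refl_on_def)
    have "\<phi> x \<otimes>\<^bsub>K\<^esub> inv\<^bsub>K\<^esub> \<phi> y = \<one>\<^bsub>K\<^esub>"
      using hom_LMlt_group_Lt(2)[OF q K \<pi> x y] \<pi>_Dis_rel[OF displ_in_Dis_rel[OF xy x y]]
      by (simp add: \<phi>_def)
    then show ?thesis using \<phi> x y by (simp add: K.inv_solve_right' Pi_iff)
  qed
  obtain e where e: "e \<in> Q \<rightarrow> carrier K" and e_\<alpha>: "\<And>x y. (x, y) \<in> \<alpha> \<Longrightarrow> e x = e y"
    and e_op: "\<And>x y. x \<in> Q \<Longrightarrow> y \<in> Q \<Longrightarrow> e (op x y) = \<phi> x \<otimes>\<^bsub>K\<^esub> inv\<^bsub>K\<^esub> \<phi> y \<otimes>\<^bsub>K\<^esub> e y"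
    using K.simply_connected_quotient_conj_cocycle[OF q c sc countable \<phi> \<phi>_\<alpha>]
      hom_LMlt_group_Lt(1)[OF q K \<pi>] unfolding \<phi>_def by blast
  have "\<pi> d \<otimes>\<^bsub>K\<^esub> e z = e z"
    using Dis_equivariant[OF q K \<pi> e _ d z] e_op e_\<alpha>[OF dz] by (simp add: \<phi>_def)
  moreover have "d \<in> carrier (LMlt_group Q op)"
    using d Dis_subset_LMlt[OF q] by (auto simp: LMlt_group_def)
  ultimately show ?thesis using e z \<pi> by (auto simp: hom_def Pi_iff)
qed

lemma Dis_class_preserving_in_Dis_rel:
  assumes q: "quandle Q op" and fin: "finite Q" and c: "congruence Q op \<alpha>"
    and sc: "simply_connected (Q // \<alpha>) (quot_op Q op \<alpha>)"
    and d: "d \<in> Dis Q op" and z: "z \<in> Q" and dz: "(d z, z) \<in> \<alpha>"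
  shows "d \<in> Dis_rel Q op \<alpha>"
proof -
  let ?L = "LMlt_group Q op" and ?N = "Dis_rel Q op \<alpha>"
  interpret N: normal ?N ?L by (rule Dis_rel_normal[OF q c])
  have L: "carrier ?L = LMlt Q op" by (simp add: LMlt_group_def)
  have "finite (carrier ?L)"
    using finite_subset[OF subgroup.subset[OF subgroup_LMlt[OF q]] finite_BijGroup[OF fin]] L by simp
  then have "countable (carrier (?L Mod ?N))" by (simp add: carrier_FactGroup countable_finite)
  moreover have "?N #>\<^bsub>?L\<^esub> h = ?N" if "h \<in> ?N" for h
    using N.coset_join2[OF _ N.subgroup_axioms that] that Dis_rel_subset_Dis[of Q op \<alpha>]
      Dis_subset_LMlt[OF q] L by blast
  ultimately have "?N #>\<^bsub>?L\<^esub> d = ?N"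
    using Dis_class_preserving_in_kernel[OF q c sc N.factorgroup_is_group _ N.r_coset_hom_Mod _ d z dz]
    by simp
  moreover have "d \<in> carrier ?L" using d Dis_subset_LMlt[OF q] L by blast
  ultimately show ?thesis using N.coset_join1[OF _ _ N.subgroup_axioms] by blast
qed

lemma congruence_eq_orbit_rel_Dis_rel:
  assumes q: "quandle Q op" and fin: "finite Q" and conn: "connected_quandle Q op"
    and c: "congruence Q op \<alpha>" and sc: "simply_connected (Q // \<alpha>) (quot_op Q op \<alpha>)"
  shows "\<alpha> = orbit_rel Q (Dis_rel Q op \<alpha>)"
proof
  have eq: "equiv Q \<alpha>" using c by (simp add: congruence_def)
  show "\<alpha> \<subseteq> orbit_rel Q (Dis_rel Q op \<alpha>)"
  proof
    fix p assume p: "p \<in> \<alpha>"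
    then obtain x y where xy: "p = (x, y)" and x: "x \<in> Q" and y: "y \<in> Q"
      using eq by (cases p) (auto simp: equiv_def refl_on_def)
    obtain d where d: "d \<in> Dis Q op" and dx: "d x = y"
      using connected_Dis_transitive[OF q conn x y] by blast
    have "(d x, x) \<in> \<alpha>" using p xy dx eq by (auto simp: equiv_def sym_def)
    then have "d \<in> Dis_rel Q op \<alpha>" by (rule Dis_class_preserving_in_Dis_rel[OF q fin c sc d x])
    then show "p \<in> orbit_rel Q (Dis_rel Q op \<alpha>)" using xy x dx by (auto simp: orbit_rel_def)
  qed
  show "orbit_rel Q (Dis_rel Q op \<alpha>) \<subseteq> \<alpha>"
    using Dis_rel_class_preserving[OF q c] eq by (auto simp: orbit_rel_def equiv_def sym_def)
qed

lemma Dis_rel_eq_Dis_up: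
  assumes q: "quandle Q op" and fin: "finite Q"
    and c: "congruence Q op \<alpha>" and sc: "simply_connected (Q // \<alpha>) (quot_op Q op \<alpha>)"
  shows "Dis_rel Q op \<alpha> = Dis_up Q op \<alpha>"
proof
  show "Dis_rel Q op \<alpha> \<subseteq> Dis_up Q op \<alpha>"
    using Dis_rel_subset_Dis[of Q op \<alpha>] Dis_subset_LMlt[OF q] Dis_rel_class_preserving[OF q c]
    by (auto simp: Dis_up_def LMlt_up_def)
  show "Dis_up Q op \<alpha> \<subseteq> Dis_rel Q op \<alpha>"
  proof
    fix h assume "h \<in> Dis_up Q op \<alpha>"
    then have h: "h \<in> Dis Q op" and h_\<alpha>: "\<forall>x\<in>Q. (h x, x) \<in> \<alpha>"
      by (simp_all add: Dis_up_def LMlt_up_def)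
    show "h \<in> Dis_rel Q op \<alpha>"
    proof (cases "Q = {}")
      case True
      have "h \<in> carrier (BijGroup Q)" using subgroup.mem_carrier[OF subgroup_Dis[OF q] h] .
      then have "h = \<one>\<^bsub>BijGroup Q\<^esub>"
        using True monoid.one_closed[OF group.is_monoid[OF group_BijGroup]] by (intro BijGroup_eqI) auto
      then show ?thesis using subgroup.one_closed[OF subgroup_Dis_rel[OF q]] by simp
    next
      case False
      then obtain z where "z \<in> Q" by blast
      then show ?thesis using Dis_class_preserving_in_Dis_rel[OF q fin c sc h] h_\<alpha> by blast
    qed
  qed
qed

theorem proposition3p5:
  fixes Q :: "'a set" and op :: "'a \<Rightarrow> 'a \<Rightarrow> 'a" and \<alpha> :: "'a rel"
  assumes "quandle Q op" and "finite Q" and "connected_quandle Q op"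
    and "congruence Q op \<alpha>"
    and "simply_connected (Q // \<alpha>) (quot_op Q op \<alpha>)"
  shows "\<alpha> = orbit_rel Q (Dis_rel Q op \<alpha>) \<and> Dis_rel Q op \<alpha> = Dis_up Q op \<alpha>"
  using congruence_eq_orbit_rel_Dis_rel[OF assms] Dis_rel_eq_Dis_up[OF assms(1,2,4,5)] by simp

end
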